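(* For every $M>0$ there exist a Stackelberg game $(G,L,F)$ and an SCE-PA $\mathbf{x}=[x_\pi]\in\mathbf{X}^{SCE\text{-}PA}$ such that $\max_{y\in\mathcal{X}^{CE}}\sum_{p\in L}u_p(y)>0$ and both $\sum_{p\in L}u_p(x_\varnothing)-\max_{y\in\mathcal{X}^{CE}}\sum_{p\in L}u_p(y)\ge M$ and $\sum_{p\in L}u_p(x_\varnothing)\ge M\cdot\max_{y\in\mathcal{X}^{CE}}\sum_{p\in L}u_p(y)$.
   Context: A finite game is $G=(N,\{S_p\}_{p\in N},\{u_p\}_{p\in N})$ with players $N=\{1,\dots,n\}$, finite nonempty strategy sets $S_p$, and utilities $u_p:S\to\mathbb{R}$ on $S=\prod_{p\in N}S_p$; write $s=(s_p,s_{-p})$ with $s_{-p}\in S_{-p}=\prod_{q\neq p}S_q$. $\mathcal{X}=\Delta(S)$ is the set of probability distributions on $S$ and $u_p(x)=\sum_{s\in S}x(s)u_p(s)$ for $x\in\mathcal{X}$. For $P\subseteq N$, $\mathcal{X}^{CE}_P$ is the set of $x\in\mathcal{X}$ such that for every $p\in P$ and all $s_p\neq s_p'\in S_p$: $\sum_{s_{-p}\in S_{-p}} x(s_p,s_{-p})\,(u_p(s_p,s_{-p})-u_p(s_p',s_{-p}))\ge 0$; $\mathcal{X}^{CE}=\mathcal{X}^{CE}_N$ is the set of correlated equilibria of $G$. A Stackelberg game (SG) is a triple $(G,L,F)$ with $L\cup F=N$ and $L\cap F=\emptyset$ (leaders and followers). For $P\subseteq N$, $\Pi_P$ is the set of ordered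 subsets of $P$ (finite sequences of pairwise distinct elements of $P$, including the empty sequence $\varnothing$); for $\pi\in\Pi_P$ and $p\in P$ not occurring in $\pi$, $\pi p$ is $\pi$ with $p$ appended; when used as a set, $\pi$ means its set of entries. $\mathbf{X}=\prod_{\pi\in\Pi_L}\mathcal{X}^{CE}_{\pi\cup F}$, with elements $\mathbf{x}=[x_\pi]_{\pi\in\Pi_L}$. For $\mathbf{x}\in\mathbf{X}$ and $\pi\in\Pi_L$, $x_\pi$ is stable if $u_p(x_\pi)\ge u_p(x_{\pi p})$ for all $p\in L\setminus\pi$; $\mathbf{x}$ is stable if $x_\varnothing$ is stable, and perfectly stable if $x_\pi$ is stable for every $\pi\in\Pi_L$; $\mathbf{X}^{S}$ and $\mathbf{X}^{PS}$ denote the sets of stable and perfectly stable elements of $\mathbf{X}$. For $\mathbf{X}'\subseteq\mathbf{X}$ and $\pi\in\Pi_L$, $\mathcal{P}_{L\setminus\pi}(\mathbf{X}')$ is the set of Pareto optimal elements of $\{x'_\pi:\mathbf{x}'\in\mathbf{X}'\}$ with respect to the objectives $u_p$, $p\in L\setminus\pi$ (an element $y$ of the set is Pareto optimal if no $y'$ in the set satisfies $u_p(y')\ge u_p(y)$ for all $p\in L\setminus\pi$ with strict inequality for some such $p$). $\mathbf{x}\in\mathbf{X}$ is an SCE-PA if $\mathbf{x}\in\mathbf{X}^{PS}$ and $x_\varnothing\in\mathcal{P}_L(\mathbf{X}^{PS})$; $\mathbf{X}^{SCE\text{-}PA}$ is the set of SCE-PAs. *)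

theory Defs
  imports Complex_Main "HOL-Library.FuncSet"
begin

text \<open>A distribution on profiles is a nonnegative function summing to 1
over the (finite) set of profiles; its values off the profiles are irrelevant.\<close>

type_synonym profile = "nat \<Rightarrow> nat"
type_synonym distr = "profile \<Rightarrow> real"

definition profiles :: "nat set \<Rightarrow> (nat \<Rightarrow> nat set) \<Rightarrow> profile set" where
  "profiles N S = PiE N S"

definition finite_game :: "nat set \<Rightarrow> (nat \<Rightarrow> nat set) \<Rightarrow> bool" where
  "finite_game N S \<longleftrightarrow> (\<exists>n\<ge>1. N = {1..n}) \<and> (\<forall>p\<in>N. finite (S p) \<and> S p \<noteq> {})"

definition is_distr :: "nat set \<Rightarrow> (nat \<Rightarrow> nat set) \<Rightarrow> distr \<Rightarrow> bool" where
  "is_distr N S x \<longleftrightarrow> (\<forall>s\<in>profiles N S. x s \<ge> 0) \<and> (\<Sum>s\<in>profiles N S. x s) = 1"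

definition util :: "nat set \<Rightarrow> (nat \<Rightarrow> nat set) \<Rightarrow> (nat \<Rightarrow> profile \<Rightarrow> real) \<Rightarrow> nat \<Rightarrow> distr \<Rightarrow> real" where
  "util N S u p x = (\<Sum>s\<in>profiles N S. x s * u p s)"

text \<open>The constraint sum over s_{-p} is written as a sum over profiles s with s p = a;
the deviation profile (a',s_{-p}) is s(p := a').\<close>
definition CE_set :: "nat set \<Rightarrow> (nat \<Rightarrow> nat set) \<Rightarrow> (nat \<Rightarrow> profile \<Rightarrow> real) \<Rightarrow> nat set \<Rightarrow> distr set" where
  "CE_set N S u P = {x. is_distr N S x \<and>
     (\<forall>p\<in>P. \<forall>a\<in>S p. \<forall>b\<in>S p. a \<noteq> b \<longrightarrow>
        (\<Sum>s\<in>{s\<in>profiles N S. s p = a}. x s * (u p s - u p (s(p := b)))) \<ge> 0)}"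

definition stackelberg :: "nat set \<Rightarrow> nat set \<Rightarrow> nat set \<Rightarrow> bool" where
  "stackelberg N L F \<longleftrightarrow> L \<union> F = N \<and> L \<inter> F = {}"

definition ordered_subsets :: "nat set \<Rightarrow> nat list set" where
  "ordered_subsets P = {\<pi>. distinct \<pi> \<and> set \<pi> \<subseteq> P}"

text \<open>An element of bold X is a map from ordered subsets of L to distributions
(values at other lists are irrelevant).\<close>
definition XX :: "nat set \<Rightarrow> (nat \<Rightarrow> nat set) \<Rightarrow> (nat \<Rightarrow> profile \<Rightarrow> real) \<Rightarrow> nat set \<Rightarrow> nat set
    \<Rightarrow> (nat list \<Rightarrow> distr) set" where
  "XX N S u L F = {xs. \<forall>\<pi>\<in>ordered_subsets L. xs \<pi> \<in> CE_set N S u (set \<pi> \<union> F)}"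

definition stable_at :: "nat set \<Rightarrow> (nat \<Rightarrow> nat set) \<Rightarrow> (nat \<Rightarrow> profile \<Rightarrow> real) \<Rightarrow> nat set
    \<Rightarrow> (nat list \<Rightarrow> distr) \<Rightarrow> nat list \<Rightarrow> bool" where
  "stable_at N S u L xs \<pi> \<longleftrightarrow> (\<forall>p\<in>L - set \<pi>. util N S u p (xs \<pi>) \<ge> util N S u p (xs (\<pi> @ [p])))"

definition XX_PS :: "nat set \<Rightarrow> (nat \<Rightarrow> nat set) \<Rightarrow> (nat \<Rightarrow> profile \<Rightarrow> real) \<Rightarrow> nat set \<Rightarrow> nat set
    \<Rightarrow> (nat list \<Rightarrow> distr) set" where
  "XX_PS N S u L F = {xs \<in> XX N S u L F. \<forall>\<pi>\<in>ordered_subsets L. stable_at N S u L xs \<pi>}"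

definition pareto_opt :: "nat set \<Rightarrow> (nat \<Rightarrow> nat set) \<Rightarrow> (nat \<Rightarrow> profile \<Rightarrow> real) \<Rightarrow> nat set
    \<Rightarrow> distr set \<Rightarrow> distr \<Rightarrow> bool" where
  "pareto_opt N S u Obj A y \<longleftrightarrow> y \<in> A \<and>
     \<not> (\<exists>y'\<in>A. (\<forall>p\<in>Obj. util N S u p y' \<ge> util N S u p y) \<and> (\<exists>p\<in>Obj. util N S u p y' > util N S u p y))"

definition SCE_PA :: "nat set \<Rightarrow> (nat \<Rightarrow> nat set) \<Rightarrow> (nat \<Rightarrow> profile \<Rightarrow> real) \<Rightarrow> nat set \<Rightarrow> nat set
    \<Rightarrow> (nat list \<Rightarrow> distr) set" where
  "SCE_PA N S u L F = {xs \<in> XX_PS N S u L F.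
     pareto_opt N S u L ((\<lambda>x'. x' []) ` XX_PS N S u L F) (xs [])}"

definition leader_welfare :: "nat set \<Rightarrow> (nat \<Rightarrow> nat set) \<Rightarrow> (nat \<Rightarrow> profile \<Rightarrow> real) \<Rightarrow> nat set \<Rightarrow> distr \<Rightarrow> real" where
  "leader_welfare N S u L x = (\<Sum>p\<in>L. util N S u p x)"

definition is_max_CE_welfare :: "nat set \<Rightarrow> (nat \<Rightarrow> nat set) \<Rightarrow> (nat \<Rightarrow> profile \<Rightarrow> real) \<Rightarrow> nat set \<Rightarrow> real \<Rightarrow> bool" where
  "is_max_CE_welfare N S u L m \<longleftrightarrow>
     (\<exists>y\<in>CE_set N S u N. leader_welfare N S u L y = m) \<and>
     (\<forall>y\<in>CE_set N S u N. leader_welfare N S u L y \<le> m)"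

end

theory Submission
  imports Defs
begin

text \<open>A prisoner's dilemma in which both leaders cooperating yields A each, while
defection is strictly dominant, so the only correlated equilibrium is mutual
defection with welfare 2. With no followers, the distribution at the empty order
need not be an equilibrium: take mutual cooperation there and mutual defection at
every nonempty order. Each leader prefers A to the payoff 1 of acting alone, and
no distribution gives the leaders more than 2A in total, so the plan is an SCE-PA
whose welfare 2A exceeds the correlated-equilibrium optimum by 2A - 2.\<close>

definition point_distr :: "profile \<Rightarrow> distr" where
  "point_distr t = (\<lambda>s. if s = t then 1 else 0)"

lemma sum_point_distr:
  assumes "finite X"
  shows "(\<Sum>s\<in>X. point_distr t s * f s) = (if t \<in> X then f t else 0)"
proof -
  have "(\<Sum>s\<in>X. point_distr t s * f s) = (\<Sum>s\<in>X. if s = t then f s else 0)"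
    by (rule sum.cong) (auto simp: point_distr_def)
  also have "\<dots> = (if t \<in> X then f t else 0)"
    using assms by (simp add: sum.delta')
  finally show ?thesis .
qed

lemma is_distr_point_distr:
  "finite (profiles N S) \<Longrightarrow> t \<in> profiles N S \<Longrightarrow> is_distr N S (point_distr t)"
  by (simp add: is_distr_def point_distr_def)

lemma util_point_distr:
  "finite (profiles N S) \<Longrightarrow> t \<in> profiles N S \<Longrightarrow> util N S u p (point_distr t) = u p t"
  by (simp add: util_def sum_point_distr)

lemma point_distr_in_CE_set:
  assumes fin: "finite (profiles N S)" and t: "t \<in> profiles N S"
    and nash: "\<And>p b. p \<in> P \<Longrightarrow> b \<in> S p \<Longrightarrow> u p (t(p := b)) \<le> u p t"
  shows "point_distr t \<in> CE_set N S u P"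
proof -
  have "0 \<le> (\<Sum>s\<in>{s\<in>profiles N S. s p = a}. point_distr t s * (u p s - u p (s(p := b))))"
    if "p \<in> P" "b \<in> S p" for p a b
    using fin that by (simp add: sum_point_distr nash)
  then show ?thesis
    using is_distr_point_distr[OF fin t] by (simp add: CE_set_def)
qed

lemma expectation_le_const:
  assumes "is_distr N S y" "\<And>s. s \<in> profiles N S \<Longrightarrow> f s \<le> c"
  shows "(\<Sum>s\<in>profiles N S. y s * f s) \<le> c"
proof -
  have "(\<Sum>s\<in>profiles N S. y s * f s) \<le> (\<Sum>s\<in>profiles N S. y s * c)"
    using assms by (intro sum_mono mult_left_mono) (auto simp: is_distr_def)
  also have "\<dots> = c"
    using assms(1) by (simp add: is_distr_def sum_distrib_right[symmetric])
  finally show ?thesis .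
qed

lemma expectation_eq_const_on_support:
  assumes "is_distr N S y" "\<And>s. s \<in> profiles N S \<Longrightarrow> y s \<noteq> 0 \<Longrightarrow> f s = c"
  shows "(\<Sum>s\<in>profiles N S. y s * f s) = c"
proof -
  have "(\<Sum>s\<in>profiles N S. y s * f s) = (\<Sum>s\<in>profiles N S. y s * c)"
    using assms(2) by (intro sum.cong) auto
  also have "\<dots> = c"
    using assms(1) by (simp add: is_distr_def sum_distrib_right[symmetric])
  finally show ?thesis .
qed

lemma leader_welfare_eq_expectation:
  "leader_welfare N S u L y = (\<Sum>s\<in>profiles N S. y s * (\<Sum>p\<in>L. u p s))"
  unfolding leader_welfare_def util_def
  by (simp add: sum_distrib_left sum.swap[of _ L])

lemma pareto_opt_if_max_welfare:
  assumes "finite Obj" "y \<in> A"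
    and max: "\<And>y'. y' \<in> A \<Longrightarrow> leader_welfare N S u Obj y' \<le> leader_welfare N S u Obj y"
  shows "pareto_opt N S u Obj A y"
  unfolding pareto_opt_def
proof (intro conjI notI \<open>y \<in> A\<close>)
  assume "\<exists>y'\<in>A. (\<forall>p\<in>Obj. util N S u p y' \<ge> util N S u p y) \<and>
                 (\<exists>p\<in>Obj. util N S u p y' > util N S u p y)"
  then obtain y' where "y' \<in> A" "\<forall>p\<in>Obj. util N S u p y \<le> util N S u p y'"
    "\<exists>p\<in>Obj. util N S u p y < util N S u p y'"
    by blast
  then have "leader_welfare N S u Obj y < leader_welfare N S u Obj y'"
    unfolding leader_welfare_def using \<open>finite Obj\<close> by (intro sum_strict_mono_ex1) auto
  with max[OF \<open>y' \<in> A\<close>] show False by simp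
qed

text \<open>The incentive constraint for deviating from a to b is a sum of nonpositive
terms, so each term vanishes; the strict loss from playing a forces y s = 0.\<close>

lemma CE_vanishes_on_dominated:
  assumes y: "y \<in> CE_set N S u P" and fin: "finite (profiles N S)"
    and p: "p \<in> P" and ab: "a \<in> S p" "b \<in> S p" "a \<noteq> b"
    and dom: "\<And>s. s \<in> profiles N S \<Longrightarrow> s p = a \<Longrightarrow> u p s < u p (s(p := b))"
    and s: "s \<in> profiles N S" "s p = a"
  shows "y s = 0"
proof -
  let ?X = "{s\<in>profiles N S. s p = a}"
  let ?g = "\<lambda>s. y s * (u p (s(p := b)) - u p s)"
  have g_nonneg: "0 \<le> ?g t" if "t \<in> ?X" for t
    using y that dom[of t] by (auto simp: CE_set_def is_distr_def)
  have "0 \<le> (\<Sum>t\<in>?X. y t * (u p t - u p (t(p := b))))"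
    using y p ab by (simp add: CE_set_def)
  also have "\<dots> = - (\<Sum>t\<in>?X. ?g t)"
    by (simp add: sum_negf[symmetric] algebra_simps)
  finally have "(\<Sum>t\<in>?X. ?g t) = 0"
    using sum_nonneg[of ?X ?g, OF g_nonneg] by linarith
  then have "?g s = 0"
    using sum_nonneg_eq_0_iff[of ?X ?g] fin g_nonneg s by auto
  with dom[OF s] show ?thesis by simp
qed

definition pd_players :: "nat set" where
  "pd_players = {1, 2}"

definition pd_strategies :: "nat \<Rightarrow> nat set" where
  "pd_strategies = (\<lambda>_. {0, 1})"

text \<open>Strategy 0 is cooperation and 1 defection.\<close>

definition pd_util :: "real \<Rightarrow> nat \<Rightarrow> profile \<Rightarrow> real" where
  "pd_util A p s = (if p = 1 then
      (if s 1 = 0 \<and> s 2 = 0 then A else if s 1 = 0 then -1 else if s 2 = 0 then A + 1 else 1)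
    else
      (if s 1 = 0 \<and> s 2 = 0 then A else if s 2 = 0 then -1 else if s 1 = 0 then A + 1 else 1))"

definition both_play :: "nat \<Rightarrow> profile" where
  "both_play v = (\<lambda>i\<in>pd_players. v)"

definition pd_plan :: "nat list \<Rightarrow> distr" where
  "pd_plan \<pi> = (if \<pi> = [] then point_distr (both_play 0) else point_distr (both_play 1))"

lemma pd_finite_game: "finite_game pd_players pd_strategies"
  unfolding finite_game_def pd_players_def pd_strategies_def
  by (intro conjI exI[of _ 2]) auto

lemma finite_pd_players: "finite pd_players"
  by (simp add: pd_players_def)

lemma finite_pd_profiles: "finite (profiles pd_players pd_strategies)"
  by (simp add: profiles_def pd_players_def pd_strategies_def finite_PiE)

lemma pd_profile_cases:
  assumes "s \<in> profiles pd_players pd_strategies"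
  shows "s 1 \<in> {0, 1}" "s 2 \<in> {0, 1}"
  using assms by (auto simp: profiles_def pd_players_def pd_strategies_def PiE_iff)

lemma both_play_in_pd_profiles: "v \<in> {0, 1} \<Longrightarrow> both_play v \<in> profiles pd_players pd_strategies"
  by (auto simp: profiles_def pd_players_def pd_strategies_def both_play_def)

lemma util_pd_plan:
  "p \<in> pd_players \<Longrightarrow>
    util pd_players pd_strategies (pd_util A) p (pd_plan \<pi>) = (if \<pi> = [] then A else 1)"
  by (simp add: pd_plan_def util_point_distr finite_pd_profiles both_play_in_pd_profiles)
     (auto simp: pd_util_def both_play_def pd_players_def)

lemma pd_defection_dominant:
  "p \<in> pd_players \<Longrightarrow> s p = 0 \<Longrightarrow> pd_util A p s < pd_util A p (s(p := 1))"
  by (auto simp: pd_util_def pd_players_def)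

lemma pd_util_sum_le:
  "A \<ge> 1 \<Longrightarrow> (\<Sum>p\<in>pd_players. pd_util A p s) \<le> 2 * A"
  by (simp add: pd_players_def pd_util_def)

lemma point_defection_in_pd_CE_set:
  "P \<subseteq> pd_players \<Longrightarrow> point_distr (both_play 1) \<in> CE_set pd_players pd_strategies (pd_util A) P"
  by (rule point_distr_in_CE_set[OF finite_pd_profiles both_play_in_pd_profiles])
     (auto simp: pd_util_def both_play_def pd_players_def pd_strategies_def)

lemma pd_CE_welfare:
  assumes y: "y \<in> CE_set pd_players pd_strategies (pd_util A) pd_players"
  shows "leader_welfare pd_players pd_strategies (pd_util A) pd_players y = 2"
  unfolding leader_welfare_eq_expectation
proof (rule expectation_eq_const_on_support)
  show "is_distr pd_players pd_strategies y"
    using y by (simp add: CE_set_def)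
next
  fix s assume s: "s \<in> profiles pd_players pd_strategies" and "y s \<noteq> 0"
  have "s p \<noteq> 0" if "p \<in> pd_players" for p
  proof
    assume "s p = 0"
    have "y s = 0"
      by (rule CE_vanishes_on_dominated[OF y finite_pd_profiles that, of 0 1])
         (use that s \<open>s p = 0\<close> pd_defection_dominant in \<open>auto simp: pd_strategies_def\<close>)
    with \<open>y s \<noteq> 0\<close> show False ..
  qed
  from this[of 1] this[of 2] have "s 1 = 1" "s 2 = 1"
    using pd_profile_cases[OF s] by (auto simp: pd_players_def)
  then show "(\<Sum>p\<in>pd_players. pd_util A p s) = 2"
    by (simp add: pd_players_def pd_util_def)
qed

lemma pd_max_CE_welfare: "is_max_CE_welfare pd_players pd_strategies (pd_util A) pd_players 2"
  unfolding is_max_CE_welfare_def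
  using point_defection_in_pd_CE_set[of pd_players A] pd_CE_welfare by auto

lemma pd_plan_in_XX_PS:
  assumes "A \<ge> 1"
  shows "pd_plan \<in> XX_PS pd_players pd_strategies (pd_util A) pd_players {}"
proof -
  have "pd_plan \<pi> \<in> CE_set pd_players pd_strategies (pd_util A) (set \<pi>)"
    if "\<pi> \<in> ordered_subsets pd_players" for \<pi>
  proof (cases "\<pi> = []")
    case True
    then show ?thesis
      by (simp add: pd_plan_def CE_set_def is_distr_point_distr
          finite_pd_profiles both_play_in_pd_profiles)
  next
    case False
    then show ?thesis
      using that point_defection_in_pd_CE_set by (simp add: pd_plan_def ordered_subsets_def)
  qed
  moreover have "stable_at pd_players pd_strategies (pd_util A) pd_players pd_plan \<pi>" for \<pi>
    using assms
    by (simp add: stable_at_def util_pd_plan)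
  ultimately show ?thesis
    by (simp add: XX_PS_def XX_def)
qed

lemma pd_plan_welfare:
  "leader_welfare pd_players pd_strategies (pd_util A) pd_players (pd_plan []) = 2 * A"
  by (simp add: leader_welfare_def util_pd_plan) (simp add: pd_players_def)

lemma pd_plan_SCE_PA:
  assumes "A \<ge> 1"
  shows "pd_plan \<in> SCE_PA pd_players pd_strategies (pd_util A) pd_players {}"
proof -
  let ?PS = "XX_PS pd_players pd_strategies (pd_util A) pd_players {}"
  have "leader_welfare pd_players pd_strategies (pd_util A) pd_players y \<le> 2 * A"
    if "y \<in> (\<lambda>x. x []) ` ?PS" for y
  proof -
    have "[] \<in> ordered_subsets pd_players"
      by (simp add: ordered_subsets_def)
    with that have "is_distr pd_players pd_strategies y"
      by (auto simp: XX_PS_def XX_def CE_set_def)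
    then show ?thesis
      unfolding leader_welfare_eq_expectation
      by (rule expectation_le_const) (rule pd_util_sum_le[OF assms])
  qed
  then have "pareto_opt pd_players pd_strategies (pd_util A) pd_players ((\<lambda>x. x []) ` ?PS) (pd_plan [])"
    using pd_plan_in_XX_PS[OF assms]
    by (intro pareto_opt_if_max_welfare) (auto simp: finite_pd_players pd_plan_welfare)
  with pd_plan_in_XX_PS[OF assms] show ?thesis
    by (simp add: SCE_PA_def)
qed

theorem mainTheorem18:
  fixes M :: real
  assumes "M > 0"
  shows "\<exists>N S u L F xs m. finite_game N S \<and> stackelberg N L F \<and> xs \<in> SCE_PA N S u L F \<and>
           is_max_CE_welfare N S u L m \<and> m > 0 \<and>
           leader_welfare N S u L (xs []) - m \<ge> M \<and>
           leader_welfare N S u L (xs []) \<ge> M * m"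
proof -
  define A where "A = M + 1"
  have "A \<ge> 1"
    using assms by (simp add: A_def)
  then have "finite_game pd_players pd_strategies \<and> stackelberg pd_players pd_players {} \<and>
      pd_plan \<in> SCE_PA pd_players pd_strategies (pd_util A) pd_players {} \<and>
      is_max_CE_welfare pd_players pd_strategies (pd_util A) pd_players 2 \<and> (2::real) > 0 \<and>
      leader_welfare pd_players pd_strategies (pd_util A) pd_players (pd_plan []) - 2 \<ge> M \<and>
      leader_welfare pd_players pd_strategies (pd_util A) pd_players (pd_plan []) \<ge> M * 2"
    using assms pd_finite_game pd_plan_SCE_PA pd_max_CE_welfare
    by (simp add: stackelberg_def pd_plan_welfare A_def)
  then show ?thesis
    by blast
qed

end
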